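(* Let $v \ge 81$ be an integer. Then \[ \beta(2,v,4) \le \left\lfloor \frac{2v-3}{3} \right\rfloor, \] and \[ \beta(2,v,4) \ge \begin{cases} \frac{2v-6}{3} & \text{if } v \equiv 0 \pmod 3,\\ \frac{2v-8}{3} & \text{if } v \equiv 1 \pmod 3,\\ \frac{2v-4}{3} & \text{if } v \equiv 2 \pmod 3. \end{cases} \]
   Context: For integers $v \ge k \ge 2$, a $(v,k)$-packing is a pair $(X,\mathcal{B})$ where $X$ is a set of $v$ points and $\mathcal{B}$ is a set of $k$-subsets of $X$ (blocks) such that every pair of distinct points lies in at most one block. A partial parallel class (PPC) is a set of pairwise disjoint blocks; its size is the number of blocks. A PPC of size $\rho$ is maximum if the packing has no PPC of size $\rho+1$. $\beta(\rho,v,k)$ denotes the maximum number of blocks in a $(v,k)$-packing in which the maximum PPC has size $\rho$. *)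

theory Defs
  imports Complex_Main
begin

definition packing :: "nat set \<Rightarrow> nat \<Rightarrow> nat set set \<Rightarrow> bool" where
  "packing X k \<B> \<longleftrightarrow>
     (\<forall>B\<in>\<B>. B \<subseteq> X \<and> card B = k) \<and>
     (\<forall>x\<in>X. \<forall>y\<in>X. x \<noteq> y \<longrightarrow> card {B\<in>\<B>. x \<in> B \<and> y \<in> B} \<le> 1)"

definition ppc :: "nat set set \<Rightarrow> nat set set \<Rightarrow> bool" where
  "ppc \<B> P \<longleftrightarrow> P \<subseteq> \<B> \<and> (\<forall>B\<in>P. \<forall>C\<in>P. B \<noteq> C \<longrightarrow> B \<inter> C = {})"

definition max_ppc_size :: "nat set set \<Rightarrow> nat \<Rightarrow> bool" where
  "max_ppc_size \<B> \<rho> \<longleftrightarrow>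
     (\<exists>P. ppc \<B> P \<and> card P = \<rho>) \<and> \<not> (\<exists>P. ppc \<B> P \<and> card P = \<rho> + 1)"

definition beta :: "nat \<Rightarrow> nat \<Rightarrow> nat \<Rightarrow> nat" where
  "beta \<rho> v k = Max {card \<B> | \<B>. packing {..<v} k \<B> \<and> max_ppc_size \<B> \<rho>}"

end

theory Submission
  imports Defs "HOL-Number_Theory.Cong"
begin

(* Let F be a packing of 4-sets on v points with two disjoint blocks but no three
   pairwise disjoint ones. If some point p lies in one block of every disjoint pair, the blocks
   avoiding p pairwise intersect. Either they share a point q, so that every block contains p or q
   and counting the points beside p and q gives 3|F| <= 2v - 3; or they have no common point, and
   then there are at most 16 of them, while at most (v - 1)/3 blocks pass through p. Otherwise
   every point misses two disjoint blocks and so lies on at most 8 blocks. Fix two disjoint blocks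
   A1 and A2: the blocks missing A2 and those missing A1 form two intersecting families, and at
   most 16 blocks meet both A1 and A2, so |F| <= 48. For v >= 74 both cases give 3|F| <= 2v - 3.

   Arrange 3m points in 3 rows and m columns and add two points 0 and 1. The columns
   extended by 0 and the cyclic diagonals extended by 1 form a packing with 2m blocks in which
   every block contains 0 or 1, so no three blocks are disjoint; take m = (v - 2) div 3. *)

section \<open>Linear families and packings\<close>

definition linear_family :: "'a set set \<Rightarrow> bool" where
  "linear_family F \<longleftrightarrow>
     (\<forall>B\<in>F. \<forall>C\<in>F. \<forall>x y. x \<noteq> y \<and> x \<in> B \<and> y \<in> B \<and> x \<in> C \<and> y \<in> C \<longrightarrow> B = C)"

definition no_three_disjoint :: "'a set set \<Rightarrow> bool" where
  "no_three_disjoint F \<longleftrightarrow>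
     \<not> (\<exists>B1\<in>F. \<exists>B2\<in>F. \<exists>B3\<in>F. B1 \<inter> B2 = {} \<and> B1 \<inter> B3 = {} \<and> B2 \<inter> B3 = {})"

lemma linear_familyD:
  "linear_family F \<Longrightarrow> B \<in> F \<Longrightarrow> C \<in> F \<Longrightarrow> x \<noteq> y \<Longrightarrow> x \<in> B \<Longrightarrow> y \<in> B \<Longrightarrow> x \<in> C \<Longrightarrow> y \<in> C
    \<Longrightarrow> B = C"
  unfolding linear_family_def by blast

lemma linear_family_subset: "linear_family F \<Longrightarrow> G \<subseteq> F \<Longrightarrow> linear_family G"
  unfolding linear_family_def by blast

lemma no_three_disjointD:
  "no_three_disjoint F \<Longrightarrow> B1 \<in> F \<Longrightarrow> B2 \<in> F \<Longrightarrow> B3 \<in> F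
    \<Longrightarrow> B1 \<inter> B2 = {} \<Longrightarrow> B1 \<inter> B3 = {} \<Longrightarrow> B2 \<inter> B3 = {} \<Longrightarrow> False"
  unfolding no_three_disjoint_def by blast

lemma no_three_disjoint_if_two_points_cover:
  assumes "\<forall>B\<in>F. a \<in> B \<or> b \<in> B"
  shows "no_three_disjoint F"
  unfolding no_three_disjoint_def using assms by (metis IntI empty_iff)

lemma card_through_pair_le:
  assumes "linear_family F" "x \<noteq> y"
  shows "card {B\<in>F. x \<in> B \<and> y \<in> B} \<le> 1"
proof (cases "finite {B\<in>F. x \<in> B \<and> y \<in> B}")
  case True
  then show ?thesis
    using linear_familyD[OF assms(1) _ _ assms(2)] by (simp add: card_le_Suc0_iff_eq)
qed simp

lemma packing_finite: "finite X \<Longrightarrow> packing X k F \<Longrightarrow> finite F"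
  by (auto simp: packing_def intro: finite_subset[of F "Pow X"])

lemma packing_iff:
  assumes "finite X"
  shows "packing X k F \<longleftrightarrow> (\<forall>B\<in>F. B \<subseteq> X \<and> card B = k) \<and> linear_family F"
proof
  assume packing: "packing X k F"
  then have "finite F"
    using packing_finite[OF assms] by blast
  have "linear_family F"
    unfolding linear_family_def
  proof (intro ballI allI impI)
    fix B C x y
    assume "B \<in> F" "C \<in> F" and xy: "x \<noteq> y \<and> x \<in> B \<and> y \<in> B \<and> x \<in> C \<and> y \<in> C"
    moreover have "x \<in> X" "y \<in> X"
      using packing \<open>B \<in> F\<close> xy unfolding packing_def by blast+
    ultimately have "card {D\<in>F. x \<in> D \<and> y \<in> D} \<le> Suc 0"
      using packing unfolding packing_def by simp
    moreover have "finite {D\<in>F. x \<in> D \<and> y \<in> D}"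
      using \<open>finite F\<close> by simp
    ultimately show "B = C"
      using \<open>B \<in> F\<close> \<open>C \<in> F\<close> xy card_le_Suc0_iff_eq by blast
  qed
  then show "(\<forall>B\<in>F. B \<subseteq> X \<and> card B = k) \<and> linear_family F"
    using packing unfolding packing_def by blast
next
  assume "(\<forall>B\<in>F. B \<subseteq> X \<and> card B = k) \<and> linear_family F"
  then show "packing X k F"
    unfolding packing_def using card_through_pair_le[of F] by auto
qed

lemma card_through_meeting_le:
  assumes lin: "linear_family F" and "finite Z" "x \<notin> Z"
  shows "card {B\<in>F. x \<in> B \<and> B \<inter> Z \<noteq> {}} \<le> card Z"
proof -
  have "{B\<in>F. x \<in> B \<and> B \<inter> Z \<noteq> {}} = (\<Union>z\<in>Z. {B\<in>F. x \<in> B \<and> z \<in> B})"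
    by blast
  then have "card {B\<in>F. x \<in> B \<and> B \<inter> Z \<noteq> {}} \<le> (\<Sum>z\<in>Z. card {B\<in>F. x \<in> B \<and> z \<in> B})"
    using card_UN_le[OF \<open>finite Z\<close>] by simp
  also have "\<dots> \<le> (\<Sum>z\<in>Z. 1)"
    by (intro sum_mono card_through_pair_le[OF lin]) (use \<open>x \<notin> Z\<close> in blast)
  finally show ?thesis
    by simp
qed

lemma card_through_le:
  assumes lin: "linear_family F" and uniform: "\<forall>B\<in>F. card B = k"
    and "finite Y" and Y: "\<forall>B\<in>F. p \<in> B \<longrightarrow> B - {p} \<subseteq> Y"
  shows "(k - 1) * card {B\<in>F. p \<in> B} \<le> card Y"
proof (cases "finite {B\<in>F. p \<in> B}")
  case True
  let ?S = "{B\<in>F. p \<in> B}"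
  have "(k - 1) * card ?S = (\<Sum>B\<in>?S. card (B - {p}))"
    using uniform by simp
  also have "\<dots> = card (\<Union>B\<in>?S. B - {p})"
  proof (rule card_UN_disjoint[symmetric, OF True])
    show "\<forall>B\<in>?S. finite (B - {p})"
      using Y finite_subset[OF _ \<open>finite Y\<close>] by blast
    show "\<forall>B\<in>?S. \<forall>C\<in>?S. B \<noteq> C \<longrightarrow> (B - {p}) \<inter> (C - {p}) = {}"
    proof (intro ballI impI)
      fix B C
      assume "B \<in> ?S" "C \<in> ?S" "B \<noteq> C"
      show "(B - {p}) \<inter> (C - {p}) = {}"
      proof (rule ccontr)
        assume "(B - {p}) \<inter> (C - {p}) \<noteq> {}"
        then obtain y where "y \<in> B" "y \<in> C" "p \<noteq> y"
          by blast
        then have "B = C"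
          using \<open>B \<in> ?S\<close> \<open>C \<in> ?S\<close> linear_familyD[OF lin] by blast
        with \<open>B \<noteq> C\<close> show False ..
      qed
    qed
  qed
  also have "\<dots> \<le> card Y"
    using Y \<open>finite Y\<close> by (intro card_mono) auto
  finally show ?thesis .
qed simp

lemma packing_card_through_le:
  assumes "packing X k F" "finite X"
  shows "(k - 1) * card {B\<in>F. p \<in> B} \<le> card X - 1"
proof (cases "p \<in> X")
  case True
  have "(k - 1) * card {B\<in>F. p \<in> B} \<le> card (X - {p})"
    using assms by (intro card_through_le) (auto simp: packing_iff)
  with True show ?thesis
    by simp
next
  case False
  then have "{B\<in>F. p \<in> B} = {}"
    using assms(1) by (auto simp: packing_def)
  then show ?thesis
    by (simp only: card.empty mult_0_right zero_le)
qed

lemma packing_card_through_either_le: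
  assumes packing: "packing X k F" and "finite X" "2 \<le> k" "p \<in> X" "q \<in> X" "p \<noteq> q"
  shows "(k - 1) * card {B\<in>F. p \<in> B \<or> q \<in> B} \<le> 2 * card X - 3"
proof -
  let ?P = "{B\<in>F. p \<in> B}" and ?Q = "{B\<in>F. q \<in> B}"
  have blocks: "\<forall>B\<in>F. B \<subseteq> X \<and> card B = k" and lin: "linear_family F"
    using packing unfolding packing_iff[OF \<open>finite X\<close>] by blast+
  have "finite F"
    using packing_finite[OF \<open>finite X\<close> packing] .
  then have "(k - 1) * card (?P \<union> ?Q) + (k - 1) * card (?P \<inter> ?Q)
      = (k - 1) * card ?P + (k - 1) * card ?Q"
    using card_Un_Int[of ?P ?Q] by (simp flip: add_mult_distrib2)
  moreover have "card X \<ge> 2"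
    using card_mono[OF \<open>finite X\<close>, of "{p, q}"] \<open>p \<in> X\<close> \<open>q \<in> X\<close> \<open>p \<noteq> q\<close> by simp
  moreover have "(k - 1) * card ?P + (k - 1) * card ?Q \<le> 2 * card X - 3 + (k - 1) * card (?P \<inter> ?Q)"
  proof (cases "?P \<inter> ?Q = {}")
    case True
    have "(k - 1) * card ?P \<le> card (X - {p, q})"
      by (rule card_through_le[OF lin]) (use blocks True \<open>finite X\<close> in blast)+
    moreover have "(k - 1) * card ?Q \<le> card (X - {p, q})"
      by (rule card_through_le[OF lin]) (use blocks True \<open>finite X\<close> in blast)+
    moreover have "card (X - {p, q}) = card X - 2"
      using \<open>p \<in> X\<close> \<open>q \<in> X\<close> \<open>p \<noteq> q\<close> by (simp add: card_Diff_subset)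
    ultimately show ?thesis
      by linarith
  next
    case False
    then have "k - 1 \<le> (k - 1) * card (?P \<inter> ?Q)"
      using \<open>finite F\<close> by (simp add: card_gt_0_iff Suc_le_eq)
    moreover have "(k - 1) * card ?P \<le> card X - 1" "(k - 1) * card ?Q \<le> card X - 1"
      using packing_card_through_le[OF packing \<open>finite X\<close>] by auto
    ultimately show ?thesis
      using \<open>2 \<le> k\<close> by linarith
  qed
  ultimately have "(k - 1) * card (?P \<union> ?Q) \<le> 2 * card X - 3"
    by linarith
  moreover have "{B\<in>F. p \<in> B \<or> q \<in> B} = ?P \<union> ?Q"
    by blast
  ultimately show ?thesis
    by simp
qed

lemma card_intersecting_le_if_no_common_point:
  assumes lin: "linear_family F" and uniform: "\<forall>B\<in>F. card B = k" "0 < k"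
    and intersecting: "\<forall>B\<in>F. \<forall>C\<in>F. B \<inter> C \<noteq> {}"
    and no_common_point: "\<forall>y. \<exists>E\<in>F. y \<notin> E"
  shows "card F \<le> k\<^sup>2"
proof -
  obtain C0 where "C0 \<in> F"
    using no_common_point by blast
  have finite_blocks: "\<forall>B\<in>F. finite B"
    using uniform \<open>0 < k\<close> by (metis card.infinite less_irrefl)
  have "finite C0" "card C0 = k"
    using \<open>C0 \<in> F\<close> finite_blocks uniform by auto
  have through_le: "card {B\<in>F. y \<in> B} \<le> k" for y
  proof -
    obtain E where "E \<in> F" "y \<notin> E"
      using no_common_point by blast
    then have "{B\<in>F. y \<in> B} = {B\<in>F. y \<in> B \<and> B \<inter> E \<noteq> {}}"
      using intersecting by blast
    also have "card \<dots> \<le> card E"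
      using \<open>E \<in> F\<close> \<open>y \<notin> E\<close> finite_blocks by (intro card_through_meeting_le[OF lin]) auto
    finally show ?thesis
      using \<open>E \<in> F\<close> uniform by simp
  qed
  have cover: "F = (\<Union>y\<in>C0. {B\<in>F. y \<in> B})"
    using intersecting \<open>C0 \<in> F\<close> by blast
  have "card F \<le> (\<Sum>y\<in>C0. card {B\<in>F. y \<in> B})"
    by (subst cover) (rule card_UN_le[OF \<open>finite C0\<close>])
  also have "\<dots> \<le> (\<Sum>y\<in>C0. k)"
    using through_le by (rule sum_mono)
  finally show ?thesis
    using \<open>card C0 = k\<close> by (simp add: power2_eq_square)
qed

lemma card_intersecting_le:
  assumes lin: "linear_family F" and uniform: "\<forall>B\<in>F. card B = k" "0 < k"
    and intersecting: "\<forall>B\<in>F. \<forall>C\<in>F. B \<inter> C \<noteq> {}"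
    and through_le: "\<And>q. card {B\<in>F. q \<in> B} \<le> k\<^sup>2"
  shows "card F \<le> k\<^sup>2"
proof (cases "\<exists>q. \<forall>B\<in>F. q \<in> B")
  case True
  then obtain q where "{B\<in>F. q \<in> B} = F"
    by blast
  then show ?thesis
    using through_le[of q] by simp
next
  case False
  then show ?thesis
    using lin uniform intersecting by (intro card_intersecting_le_if_no_common_point) auto
qed

lemma card_through_le_if_avoided_by_disjoint_pair:
  assumes lin: "linear_family F" and no3: "no_three_disjoint F"
    and C: "C1 \<in> F" "C2 \<in> F" "C1 \<inter> C2 = {}" "finite C1" "finite C2"
    and p: "p \<notin> C1" "p \<notin> C2"
  shows "card {B\<in>F. p \<in> B} \<le> card C1 + card C2"
proof -
  have "{B\<in>F. p \<in> B} = {B\<in>F. p \<in> B \<and> B \<inter> (C1 \<union> C2) \<noteq> {}}"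
    using no_three_disjointD[OF no3 _ C(1,2)] C(3) by blast
  also have "card \<dots> \<le> card (C1 \<union> C2)"
    using C p by (intro card_through_meeting_le[OF lin]) auto
  also have "\<dots> \<le> card C1 + card C2"
    by (rule card_Un_le)
  finally show ?thesis .
qed

lemma card_meeting_both_le:
  assumes lin: "linear_family F" and A: "A1 \<inter> A2 = {}" "finite A1" "finite A2"
  shows "card {B\<in>F. B \<inter> A1 \<noteq> {} \<and> B \<inter> A2 \<noteq> {}} \<le> card A1 * card A2"
proof -
  have cover: "{B\<in>F. B \<inter> A1 \<noteq> {} \<and> B \<inter> A2 \<noteq> {}} = (\<Union>a\<in>A1. {B\<in>F. a \<in> B \<and> B \<inter> A2 \<noteq> {}})"
    by (auto simp: disjoint_iff)
  have "card {B\<in>F. B \<inter> A1 \<noteq> {} \<and> B \<inter> A2 \<noteq> {}}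
      \<le> (\<Sum>a\<in>A1. card {B\<in>F. a \<in> B \<and> B \<inter> A2 \<noteq> {}})"
    unfolding cover by (rule card_UN_le[OF \<open>finite A1\<close>])
  also have "\<dots> \<le> (\<Sum>a\<in>A1. card A2)"
    using A by (intro sum_mono card_through_meeting_le[OF lin]) blast+
  finally show ?thesis
    by simp
qed

section \<open>Packings without three disjoint blocks\<close>

lemma packing_card_le_if_intersecting_off_point:
  assumes packing: "packing X k F" and "finite X" "2 \<le> k" "p \<in> X"
    and off_p: "\<forall>B\<in>F. \<forall>C\<in>F. p \<notin> B \<longrightarrow> p \<notin> C \<longrightarrow> B \<inter> C \<noteq> {}"
  shows "(k - 1) * card F \<le> max (2 * card X - 3) (card X - 1 + (k - 1) * k\<^sup>2)"
proof -
  let ?P = "{B\<in>F. p \<in> B}" and ?R = "{B\<in>F. p \<notin> B}"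
  have blocks: "\<forall>B\<in>F. B \<subseteq> X \<and> card B = k" and lin: "linear_family F"
    using packing unfolding packing_iff[OF \<open>finite X\<close>] by blast+
  have through_p: "(k - 1) * card ?P \<le> card X - 1"
    using packing_card_through_le[OF packing \<open>finite X\<close>] .
  consider (empty) "?R = {}" | (common) q B0 where "B0 \<in> ?R" "\<forall>B\<in>?R. q \<in> B"
    | (no_common) "?R \<noteq> {}" "\<forall>q. \<exists>E\<in>?R. q \<notin> E"
    by blast
  then show ?thesis
  proof cases
    case empty
    then have "?P = F"
      by blast
    then show ?thesis
      using through_p by (simp add: le_max_iff_disj)
  next
    case (common q B0)
    then have "q \<in> X" "p \<noteq> q"
      using blocks by blast+
    moreover have "{B\<in>F. p \<in> B \<or> q \<in> B} = F"
      using common by blast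
    ultimately have "(k - 1) * card F \<le> 2 * card X - 3"
      using packing_card_through_either_le[OF packing \<open>finite X\<close> \<open>2 \<le> k\<close> \<open>p \<in> X\<close>] by metis
    then show ?thesis
      by (simp add: le_max_iff_disj)
  next
    case no_common
    have "card ?R \<le> k\<^sup>2"
      using lin blocks off_p no_common \<open>2 \<le> k\<close>
      by (intro card_intersecting_le_if_no_common_point[where k = k])
         (auto intro: linear_family_subset)
    moreover have "card F \<le> card ?P + card ?R"
    proof -
      have "?P \<union> ?R = F"
        by blast
      then show ?thesis
        using card_Un_le[of ?P ?R] by simp
    qed
    ultimately have "(k - 1) * card F \<le> (k - 1) * (card ?P + k\<^sup>2)"
      by (intro mult_le_mono2) linarith
    then show ?thesis
      using through_p by (simp add: add_mult_distrib2 le_max_iff_disj)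
  qed
qed

lemma card_le_if_points_avoided_by_disjoint_pairs:
  assumes lin: "linear_family F" and "finite F" and uniform: "\<forall>B\<in>F. card B = k" "2 \<le> k"
    and no3: "no_three_disjoint F"
    and avoided: "\<forall>q. \<exists>B\<in>F. \<exists>C\<in>F. q \<notin> B \<and> q \<notin> C \<and> B \<inter> C = {}"
  shows "card F \<le> 3 * k\<^sup>2"
proof -
  have finite_blocks: "\<forall>B\<in>F. finite B"
    using uniform by (metis card.infinite not_numeral_le_zero)
  have through_le: "card {B\<in>F. q \<in> B} \<le> k\<^sup>2" for q
  proof -
    obtain C1 C2 where C: "C1 \<in> F" "C2 \<in> F" "q \<notin> C1" "q \<notin> C2" "C1 \<inter> C2 = {}"
      using avoided by blast
    then have "card {B\<in>F. q \<in> B} \<le> card C1 + card C2"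
      using finite_blocks by (intro card_through_le_if_avoided_by_disjoint_pair[OF lin no3]) auto
    also have "\<dots> = 2 * k"
      using uniform C by simp
    also have "\<dots> \<le> k\<^sup>2"
      using \<open>2 \<le> k\<close> by (simp add: power2_eq_square)
    finally show ?thesis .
  qed
  have intersecting_le: "card G \<le> k\<^sup>2" if "G \<subseteq> F" "\<forall>B\<in>G. \<forall>C\<in>G. B \<inter> C \<noteq> {}" for G
  proof (rule card_intersecting_le)
    show "linear_family G" "\<forall>B\<in>G. card B = k" "0 < k"
      using lin uniform \<open>G \<subseteq> F\<close> by (auto intro: linear_family_subset)
    show "card {B\<in>G. q \<in> B} \<le> k\<^sup>2" for q
    proof -
      have "card {B\<in>G. q \<in> B} \<le> card {B\<in>F. q \<in> B}"
        using \<open>finite F\<close> \<open>G \<subseteq> F\<close> by (intro card_mono) auto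
      with through_le[of q] show ?thesis
        by linarith
    qed
  qed (use that in blast)
  obtain A1 A2 where A: "A1 \<in> F" "A2 \<in> F" "A1 \<inter> A2 = {}"
    using avoided by blast
  let ?U1 = "{B\<in>F. B \<inter> A2 = {}}" and ?U2 = "{B\<in>F. B \<inter> A1 = {}}"
    and ?W = "{B\<in>F. B \<inter> A1 \<noteq> {} \<and> B \<inter> A2 \<noteq> {}}"
  have "card ?U1 \<le> k\<^sup>2"
    using no_three_disjointD[OF no3 _ _ A(2)] by (intro intersecting_le) auto
  moreover have "card ?U2 \<le> k\<^sup>2"
    using no_three_disjointD[OF no3 _ _ A(1)] by (intro intersecting_le) auto
  moreover have "card ?W \<le> k\<^sup>2"
    using card_meeting_both_le[OF lin A(3)] finite_blocks uniform A by (simp add: power2_eq_square)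
  moreover have "card F \<le> card ?U1 + card ?U2 + card ?W"
  proof -
    have "?U1 \<union> ?U2 \<union> ?W = F"
      by blast
    then have "card F = card (?U1 \<union> ?U2 \<union> ?W)"
      by simp
    also have "\<dots> \<le> card (?U1 \<union> ?U2) + card ?W"
      by (rule card_Un_le)
    also have "\<dots> \<le> card ?U1 + card ?U2 + card ?W"
      using card_Un_le[of ?U1 ?U2] by simp
    finally show ?thesis .
  qed
  ultimately show ?thesis
    by linarith
qed

lemma packing_card_le_if_no_three_disjoint:
  assumes packing: "packing X k F" and "finite X" "2 \<le> k"
    and large: "3 * (k - 1) * k\<^sup>2 + 3 \<le> 2 * card X"
    and no3: "no_three_disjoint F" and A: "A1 \<in> F" "A2 \<in> F" "A1 \<inter> A2 = {}"
  shows "(k - 1) * card F \<le> 2 * card X - 3"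
proof -
  have blocks: "\<forall>B\<in>F. B \<subseteq> X \<and> card B = k" and lin: "linear_family F"
    using packing unfolding packing_iff[OF \<open>finite X\<close>] by blast+
  have "3 * (k - 1) * k\<^sup>2 = 3 * ((k - 1) * k\<^sup>2)"
    by (rule mult.assoc)
  have "0 < (k - 1) * k\<^sup>2"
    using \<open>2 \<le> k\<close> by (intro mult_pos_pos) auto
  show ?thesis
  proof (cases "\<exists>p. \<forall>B\<in>F. \<forall>C\<in>F. p \<notin> B \<longrightarrow> p \<notin> C \<longrightarrow> B \<inter> C \<noteq> {}")
    case True
    then obtain p where off_p: "\<forall>B\<in>F. \<forall>C\<in>F. p \<notin> B \<longrightarrow> p \<notin> C \<longrightarrow> B \<inter> C \<noteq> {}"
      by blast
    have "p \<in> A1 \<or> p \<in> A2"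
      using off_p[rule_format, OF A(1,2)] A(3) by blast
    then have "p \<in> X"
      using A(1,2) blocks by auto
    then have "(k - 1) * card F \<le> max (2 * card X - 3) (card X - 1 + (k - 1) * k\<^sup>2)"
      by (rule packing_card_le_if_intersecting_off_point[OF packing \<open>finite X\<close> \<open>2 \<le> k\<close> _ off_p])
    moreover have "card X - 1 + (k - 1) * k\<^sup>2 \<le> 2 * card X - 3"
      using large \<open>3 * (k - 1) * k\<^sup>2 = 3 * ((k - 1) * k\<^sup>2)\<close> \<open>0 < (k - 1) * k\<^sup>2\<close> by linarith
    ultimately show ?thesis
      by simp
  next
    case False
    then have "\<forall>q. \<exists>B\<in>F. \<exists>C\<in>F. q \<notin> B \<and> q \<notin> C \<and> B \<inter> C = {}"
      by auto
    moreover have "\<forall>B\<in>F. card B = k"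
      using blocks by blast
    ultimately have "card F \<le> 3 * k\<^sup>2"
      using card_le_if_points_avoided_by_disjoint_pairs[OF lin packing_finite[OF \<open>finite X\<close> packing]]
        \<open>2 \<le> k\<close> no3 by simp
    then have "(k - 1) * card F \<le> 3 * (k - 1) * k\<^sup>2"
      using mult_le_mono2[of "card F" "3 * k\<^sup>2" "k - 1"] by (simp add: ac_simps)
    then show ?thesis
      using large by linarith
  qed
qed

lemma ex_ppc_card_two_iff:
  assumes nonempty: "\<forall>B\<in>F. B \<noteq> {}"
  shows "(\<exists>P. ppc F P \<and> card P = 2) \<longleftrightarrow> (\<exists>A1\<in>F. \<exists>A2\<in>F. A1 \<inter> A2 = {})"
proof
  assume "\<exists>P. ppc F P \<and> card P = 2"
  then obtain A1 A2 where "ppc F {A1, A2}" "A1 \<noteq> A2"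
    by (auto simp: card_2_iff)
  then have "A1 \<in> F \<and> A2 \<in> F \<and> A1 \<inter> A2 = {}"
    unfolding ppc_def by simp
  then show "\<exists>A1\<in>F. \<exists>A2\<in>F. A1 \<inter> A2 = {}"
    by blast
next
  assume "\<exists>A1\<in>F. \<exists>A2\<in>F. A1 \<inter> A2 = {}"
  then obtain A1 A2 where A: "A1 \<in> F" "A2 \<in> F" "A1 \<inter> A2 = {}"
    by blast
  then have "A1 \<noteq> A2"
    using nonempty by auto
  with A have "ppc F {A1, A2} \<and> card {A1, A2} = 2"
    by (auto simp: ppc_def)
  then show "\<exists>P. ppc F P \<and> card P = 2" ..
qed

lemma ex_ppc_card_three_iff:
  assumes nonempty: "\<forall>B\<in>F. B \<noteq> {}"
  shows "(\<exists>P. ppc F P \<and> card P = 3) \<longleftrightarrow> \<not> no_three_disjoint F"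
proof
  assume "\<exists>P. ppc F P \<and> card P = 3"
  then obtain B1 B2 B3 where "ppc F {B1, B2, B3}" "B1 \<noteq> B2" "B2 \<noteq> B3" "B1 \<noteq> B3"
    by (auto simp: card_3_iff)
  then have "B1 \<in> F" "B2 \<in> F" "B3 \<in> F" "B1 \<inter> B2 = {}" "B1 \<inter> B3 = {}" "B2 \<inter> B3 = {}"
    unfolding ppc_def by simp_all
  then show "\<not> no_three_disjoint F"
    using no_three_disjointD by blast
next
  assume "\<not> no_three_disjoint F"
  then obtain B1 B2 B3 where B: "B1 \<in> F" "B2 \<in> F" "B3 \<in> F"
    "B1 \<inter> B2 = {}" "B1 \<inter> B3 = {}" "B2 \<inter> B3 = {}"
    unfolding no_three_disjoint_def by blast
  then have "B1 \<noteq> B2" "B1 \<noteq> B3" "B2 \<noteq> B3"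
    using nonempty by auto
  with B have "ppc F {B1, B2, B3} \<and> card {B1, B2, B3} = 3"
    by (auto simp: ppc_def)
  then show "\<exists>P. ppc F P \<and> card P = 3" ..
qed

lemma max_ppc_size_two_iff:
  assumes "\<forall>B\<in>F. B \<noteq> {}"
  shows "max_ppc_size F 2 \<longleftrightarrow> (\<exists>A1\<in>F. \<exists>A2\<in>F. A1 \<inter> A2 = {}) \<and> no_three_disjoint F"
  unfolding max_ppc_size_def using ex_ppc_card_two_iff[OF assms] ex_ppc_card_three_iff[OF assms] by simp

lemma packing_card_le_if_max_ppc_size_two:
  assumes packing: "packing X k F" and "finite X" "2 \<le> k"
    and large: "3 * (k - 1) * k\<^sup>2 + 3 \<le> 2 * card X" and "max_ppc_size F 2"
  shows "(k - 1) * card F \<le> 2 * card X - 3"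
proof -
  have "\<forall>B\<in>F. B \<noteq> {}"
    using packing \<open>2 \<le> k\<close> by (auto simp: packing_def)
  then obtain A1 A2 where "A1 \<in> F" "A2 \<in> F" "A1 \<inter> A2 = {}" and "no_three_disjoint F"
    using \<open>max_ppc_size F 2\<close> max_ppc_size_two_iff by blast
  then show ?thesis
    using packing_card_le_if_no_three_disjoint[OF packing \<open>finite X\<close> \<open>2 \<le> k\<close> large] by blast
qed

section \<open>A packing with 2m blocks and no three disjoint ones\<close>

lemma mod_add_right_cancel_less:
  fixes a b c m :: nat
  assumes "(a + c) mod m = (b + c) mod m" "a < m" "b < m"
  shows "a = b"
  using assms cong_add_rcancel_nat cong_less_modulus_unique_nat unfolding cong_def by metis

definition grid_point :: "nat \<Rightarrow> nat \<Rightarrow> nat" where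
  "grid_point s c = 2 + s + 3 * c"

definition grid_line :: "(nat \<Rightarrow> nat) \<Rightarrow> nat set" where
  "grid_line f = (\<lambda>s. grid_point s (f s)) ` {..<3}"

(* grid_point s c is the point in row s < 3 and column c of a 3 x m grid on the points
   2, ..., 3m + 1; the blocks through 0 are the columns, those through 1 the cyclic diagonals. *)
definition column_diagonal_blocks :: "nat \<Rightarrow> nat set set" where
  "column_diagonal_blocks m =
     (\<lambda>c. insert 0 (grid_line (\<lambda>_. c))) ` {..<m} \<union>
     (\<lambda>d. insert 1 (grid_line (\<lambda>s. (d + s) mod m))) ` {..<m}"

lemma grid_point_eq_iff:
  "s < 3 \<Longrightarrow> s' < 3 \<Longrightarrow> grid_point s c = grid_point s' c' \<longleftrightarrow> s = s' \<and> c = c'"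
  unfolding grid_point_def by presburger

lemma zero_notin_grid_line: "0 \<notin> grid_line f"
  and one_notin_grid_line: "1 \<notin> grid_line f"
  by (auto simp: grid_line_def grid_point_def)

lemma finite_grid_line: "finite (grid_line f)"
  unfolding grid_line_def by simp

lemma card_grid_line: "card (grid_line f) = 3"
  unfolding grid_line_def by (subst card_image) (auto simp: inj_on_def grid_point_eq_iff)

lemma grid_line_subset:
  assumes "\<And>s. s < 3 \<Longrightarrow> f s < m"
  shows "grid_line f \<subseteq> {..<3 * m + 2}"
proof
  fix x
  assume "x \<in> grid_line f"
  then obtain s where "s < 3" "x = 2 + s + 3 * f s"
    by (auto simp: grid_line_def grid_point_def)
  moreover have "f s < m"
    using assms \<open>s < 3\<close> .
  ultimately show "x \<in> {..<3 * m + 2}"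
    by simp
qed

lemma common_point_grid_lines:
  assumes "x \<in> grid_line f" "x \<in> grid_line g"
  shows "\<exists>s<3. x = grid_point s (f s) \<and> f s = g s"
  using assms by (auto simp: grid_line_def grid_point_eq_iff)

lemma disjoint_grid_lines:
  assumes "\<And>s. s < 3 \<Longrightarrow> f s \<noteq> g s"
  shows "grid_line f \<inter> grid_line g = {}"
proof (rule equals0I)
  fix x
  assume "x \<in> grid_line f \<inter> grid_line g"
  then obtain s where "s < 3" "f s = g s"
    using common_point_grid_lines by blast
  with assms show False
    by blast
qed

lemma grid_line_eq_iff: "grid_line f = grid_line g \<longleftrightarrow> (\<forall>s<3. f s = g s)"
proof
  assume eq: "grid_line f = grid_line g"
  show "\<forall>s<3. f s = g s"
  proof (intro allI impI)
    fix s :: nat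
    assume "s < 3"
    then have "grid_point s (f s) \<in> grid_line f"
      unfolding grid_line_def by blast
    moreover from this have "grid_point s (f s) \<in> grid_line g"
      unfolding eq .
    ultimately show "f s = g s"
      using \<open>s < 3\<close> common_point_grid_lines grid_point_eq_iff by metis
  qed
qed (auto simp: grid_line_def)

lemma column_diagonal_blocks_cases:
  assumes "B \<in> column_diagonal_blocks m"
  obtains (column) c where "c < m" "B = insert 0 (grid_line (\<lambda>_. c))"
    | (diagonal) d where "d < m" "B = insert 1 (grid_line (\<lambda>s. (d + s) mod m))"
  using assms unfolding column_diagonal_blocks_def by blast

lemma column_diagonal_block_subset:
  assumes "B \<in> column_diagonal_blocks m"
  shows "B \<subseteq> {..<3 * m + 2}"
  using assms
proof (cases rule: column_diagonal_blocks_cases)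
  case (column c)
  then show ?thesis
    using grid_line_subset[of "\<lambda>_. c" m] by auto
next
  case (diagonal d)
  then show ?thesis
    using grid_line_subset[of "\<lambda>s. (d + s) mod m" m] by auto
qed

lemma card_column_diagonal_block:
  assumes "B \<in> column_diagonal_blocks m"
  shows "card B = 4"
  using assms
  by (cases rule: column_diagonal_blocks_cases)
    (simp_all add: finite_grid_line card_grid_line zero_notin_grid_line one_notin_grid_line[simplified])

lemma zero_or_one_mem_column_diagonal_block:
  assumes "B \<in> column_diagonal_blocks m"
  shows "0 \<in> B \<or> 1 \<in> B"
  using assms by (cases rule: column_diagonal_blocks_cases) auto

lemma column_meets_diagonal_at_most_once:
  assumes "3 \<le> m"
    and x: "x \<in> grid_line (\<lambda>_. c)" "x \<in> grid_line (\<lambda>s. (d + s) mod m)"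
    and y: "y \<in> grid_line (\<lambda>_. c)" "y \<in> grid_line (\<lambda>s. (d + s) mod m)"
  shows "x = y"
proof -
  obtain s where s: "s < 3" "x = grid_point s c" "c = (d + s) mod m"
    using common_point_grid_lines[OF x] by blast
  obtain t where t: "t < 3" "y = grid_point t c" "c = (d + t) mod m"
    using common_point_grid_lines[OF y] by blast
  have "(s + d) mod m = (t + d) mod m"
    using s(3) t(3) by (metis add.commute)
  then have "s = t"
    by (rule mod_add_right_cancel_less) (use s(1) t(1) \<open>3 \<le> m\<close> in linarith)+
  then show ?thesis
    using s(2) t(2) by simp
qed

lemma column_block_meets_diagonal_block_at_most_once:
  assumes "3 \<le> m"
    and "x \<in> insert 0 (grid_line (\<lambda>_. c)) \<inter> insert 1 (grid_line (\<lambda>s. (d + s) mod m))"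
    and "y \<in> insert 0 (grid_line (\<lambda>_. c)) \<inter> insert 1 (grid_line (\<lambda>s. (d + s) mod m))"
  shows "x = y"
proof -
  have "x \<in> grid_line (\<lambda>_. c)" "x \<in> grid_line (\<lambda>s. (d + s) mod m)"
    "y \<in> grid_line (\<lambda>_. c)" "y \<in> grid_line (\<lambda>s. (d + s) mod m)"
    using assms(2,3) zero_notin_grid_line one_notin_grid_line by auto
  then show ?thesis
    by (rule column_meets_diagonal_at_most_once[OF assms(1)])
qed

lemma linear_family_column_diagonal_blocks:
  assumes "3 \<le> m"
  shows "linear_family (column_diagonal_blocks m)"
  unfolding linear_family_def
proof (intro ballI allI impI)
  fix B C x y
  assume B: "B \<in> column_diagonal_blocks m" and C: "C \<in> column_diagonal_blocks m"
    and xy: "x \<noteq> y \<and> x \<in> B \<and> y \<in> B \<and> x \<in> C \<and> y \<in> C"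
  from B show "B = C"
  proof (cases rule: column_diagonal_blocks_cases)
    case (column c)
    from C show ?thesis
    proof (cases rule: column_diagonal_blocks_cases)
      case (column c')
      then obtain z where "z \<in> grid_line (\<lambda>_. c)" "z \<in> grid_line (\<lambda>_. c')"
        using xy \<open>B = insert 0 (grid_line (\<lambda>_. c))\<close> by blast
      then have "c = c'"
        using common_point_grid_lines by blast
      then show ?thesis
        using \<open>B = insert 0 (grid_line (\<lambda>_. c))\<close> column by simp
    next
      case (diagonal d)
      have "x = y"
        by (rule column_block_meets_diagonal_block_at_most_once[OF assms, of x c d y])
          (use xy column diagonal in simp_all)
      with xy show ?thesis
        by blast
    qed
  next
    case (diagonal d)
    from C show ?thesis
    proof (cases rule: column_diagonal_blocks_cases)
      case (column c)
      have "x = y"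
        by (rule column_block_meets_diagonal_block_at_most_once[OF assms, of x c d y])
          (use xy column diagonal in simp_all)
      with xy show ?thesis
        by blast
    next
      case (diagonal d')
      then obtain z where "z \<in> grid_line (\<lambda>s. (d + s) mod m)" "z \<in> grid_line (\<lambda>s. (d' + s) mod m)"
        using xy \<open>B = insert 1 (grid_line (\<lambda>s. (d + s) mod m))\<close> by blast
      then obtain s where "(d + s) mod m = (d' + s) mod m"
        using common_point_grid_lines by blast
      then have "d = d'"
        using \<open>d < m\<close> \<open>d' < m\<close> by (rule mod_add_right_cancel_less)
      then show ?thesis
        using \<open>B = insert 1 (grid_line (\<lambda>s. (d + s) mod m))\<close> diagonal by simp
    qed
  qed
qed

lemma card_column_diagonal_blocks: "card (column_diagonal_blocks m) = 2 * m"
proof -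
  let ?columns = "(\<lambda>c. insert 0 (grid_line (\<lambda>_. c))) ` {..<m}"
    and ?diagonals = "(\<lambda>d. insert 1 (grid_line (\<lambda>s. (d + s) mod m))) ` {..<m}"
  have "inj_on (\<lambda>c. insert 0 (grid_line (\<lambda>_. c))) {..<m}"
  proof (rule inj_onI)
    fix c c'
    assume "insert 0 (grid_line (\<lambda>_. c)) = insert 0 (grid_line (\<lambda>_. c'))"
    then have "grid_line (\<lambda>_. c) = grid_line (\<lambda>_. c')"
      using insert_ident[OF zero_notin_grid_line zero_notin_grid_line] by blast
    then show "c = c'"
      using grid_line_eq_iff zero_less_numeral by metis
  qed
  moreover have "inj_on (\<lambda>d. insert 1 (grid_line (\<lambda>s. (d + s) mod m))) {..<m}"
  proof (rule inj_onI)
    fix d d'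
    assume "d \<in> {..<m}" "d' \<in> {..<m}"
      and "insert 1 (grid_line (\<lambda>s. (d + s) mod m)) = insert 1 (grid_line (\<lambda>s. (d' + s) mod m))"
    then have "grid_line (\<lambda>s. (d + s) mod m) = grid_line (\<lambda>s. (d' + s) mod m)"
      using insert_ident[OF one_notin_grid_line one_notin_grid_line] by blast
    then have "(d + 0) mod m = (d' + 0) mod m"
      using grid_line_eq_iff zero_less_numeral by metis
    with \<open>d \<in> {..<m}\<close> \<open>d' \<in> {..<m}\<close> show "d = d'"
      by simp
  qed
  moreover have "?columns \<inter> ?diagonals = {}"
    using zero_notin_grid_line by auto
  ultimately have "card (?columns \<union> ?diagonals) = m + m"
    by (simp add: card_Un_disjoint card_image)
  then show ?thesis
    unfolding column_diagonal_blocks_def by simp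
qed

lemma packing_column_diagonal_blocks:
  assumes "3 \<le> m" "3 * m + 2 \<le> v"
  shows "packing {..<v} 4 (column_diagonal_blocks m)"
proof -
  have "\<forall>B\<in>column_diagonal_blocks m. B \<subseteq> {..<v} \<and> card B = 4"
    using column_diagonal_block_subset card_column_diagonal_block \<open>3 * m + 2 \<le> v\<close>
    by (meson lessThan_subset_iff subset_trans)
  then show ?thesis
    using linear_family_column_diagonal_blocks[OF \<open>3 \<le> m\<close>] packing_iff[OF finite_lessThan] by blast
qed

lemma max_ppc_size_column_diagonal_blocks:
  assumes "4 \<le> m"
  shows "max_ppc_size (column_diagonal_blocks m) 2"
proof -
  let ?A1 = "insert 0 (grid_line (\<lambda>_. 0))" and ?A2 = "insert 1 (grid_line (\<lambda>s. (1 + s) mod m))"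
  have cover: "\<forall>B\<in>column_diagonal_blocks m. 0 \<in> B \<or> 1 \<in> B"
    using zero_or_one_mem_column_diagonal_block by blast
  have "?A1 \<in> column_diagonal_blocks m"
    unfolding column_diagonal_blocks_def by (intro UnI1 rev_image_eqI[of 0]) (use \<open>4 \<le> m\<close> in simp_all)
  moreover have "?A2 \<in> column_diagonal_blocks m"
    unfolding column_diagonal_blocks_def by (intro UnI2 rev_image_eqI[of 1]) (use \<open>4 \<le> m\<close> in simp_all)
  moreover have "?A1 \<inter> ?A2 = {}"
  proof -
    have "grid_line (\<lambda>_. 0) \<inter> grid_line (\<lambda>s. (1 + s) mod m) = {}"
      using \<open>4 \<le> m\<close> by (intro disjoint_grid_lines) simp
    then show ?thesis
      using zero_notin_grid_line one_notin_grid_line by auto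
  qed
  ultimately have "\<exists>A1\<in>column_diagonal_blocks m. \<exists>A2\<in>column_diagonal_blocks m. A1 \<inter> A2 = {}"
    by blast
  moreover have "\<forall>B\<in>column_diagonal_blocks m. B \<noteq> {}"
    using cover by blast
  ultimately show ?thesis
    using max_ppc_size_two_iff no_three_disjoint_if_two_points_cover[OF cover] by simp
qed

section \<open>Bounds on beta\<close>

lemma finite_packing_sizes: "finite {card F | F. packing {..<v} k F \<and> max_ppc_size F \<rho>}"
proof (rule finite_subset)
  show "{card F | F. packing {..<v} k F \<and> max_ppc_size F \<rho>} \<subseteq> card ` Pow (Pow {..<v})"
  proof
    fix n
    assume "n \<in> {card F | F. packing {..<v} k F \<and> max_ppc_size F \<rho>}"
    then obtain F where "n = card F" "packing {..<v} k F"
      by blast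
    then have "F \<in> Pow (Pow {..<v})"
      by (auto simp: packing_def)
    with \<open>n = card F\<close> show "n \<in> card ` Pow (Pow {..<v})"
      by blast
  qed
qed simp

lemma card_le_beta: "packing {..<v} k F \<Longrightarrow> max_ppc_size F \<rho> \<Longrightarrow> card F \<le> beta \<rho> v k"
  unfolding beta_def by (rule Max_ge[OF finite_packing_sizes]) blast

lemma beta_le:
  assumes "packing {..<v} k F0" "max_ppc_size F0 \<rho>"
    and "\<And>F. packing {..<v} k F \<Longrightarrow> max_ppc_size F \<rho> \<Longrightarrow> card F \<le> b"
  shows "beta \<rho> v k \<le> b"
  unfolding beta_def using assms by (intro Max.boundedI[OF finite_packing_sizes]) auto

lemma real_two_mul_div_three:
  fixes v :: nat
  assumes "2 \<le> v"
  shows "real (2 * ((v - 2) div 3)) =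
    (if v mod 3 = 0 then (2 * real v - 6) / 3
     else if v mod 3 = 1 then (2 * real v - 8) / 3
     else (2 * real v - 4) / 3)"
proof -
  define q where "q = (v - 2) div 3"
  have "v = 3 * q + 3 \<and> v mod 3 = 0 \<or> v = 3 * q + 4 \<and> v mod 3 = 1 \<or> v = 3 * q + 2 \<and> v mod 3 = 2"
    unfolding q_def using assms by presburger
  then show ?thesis
    unfolding q_def[symmetric] by auto
qed

theorem theorem4p2:
  fixes v :: nat
  assumes "v \<ge> 81"
  shows "beta 2 v 4 \<le> (2 * v - 3) div 3 \<and>
         real (beta 2 v 4) \<ge>
           (if v mod 3 = 0 then (2 * real v - 6) / 3
            else if v mod 3 = 1 then (2 * real v - 8) / 3
            else (2 * real v - 4) / 3)"
proof -
  define m where "m = (v - 2) div 3"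
  have "4 \<le> m" "3 * m + 2 \<le> v"
    using assms unfolding m_def by linarith+
  then have construction: "packing {..<v} 4 (column_diagonal_blocks m)"
    "max_ppc_size (column_diagonal_blocks m) 2"
    using packing_column_diagonal_blocks max_ppc_size_column_diagonal_blocks by simp_all
  have upper: "beta 2 v 4 \<le> (2 * v - 3) div 3"
  proof (rule beta_le[OF construction])
    fix F
    assume "packing {..<v} 4 F" "max_ppc_size F 2"
    then have "(4 - 1) * card F \<le> 2 * card {..<v} - 3"
      using assms by (intro packing_card_le_if_max_ppc_size_two) auto
    then show "card F \<le> (2 * v - 3) div 3"
      by (simp add: less_eq_div_iff_mult_less_eq)
  qed
  have "2 * m \<le> beta 2 v 4"
    using card_le_beta[OF construction] card_column_diagonal_blocks by simp
  then have lower: "real (2 * m) \<le> real (beta 2 v 4)"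
    by linarith
  show ?thesis
    using upper lower real_two_mul_div_three[of v] assms unfolding m_def by simp
qed

end
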